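(* Let $\alpha\in(0,1/2)$ and $N\in\mathbb{N}$. There exist $h_0>0$ and $C>0$ such that for all $h\in(0,h_0]$, all $m\in\mathbb{R}$ and every eigenfunction $v_{h,m}$ associated with $\lambda_{1,m}(h)$, $$0\leq 1-\frac{\int_{r_{\min}-h^\alpha}^{r_{\min}+h^\alpha}e^{-2\phi/h}|v_{h,m}|^2dr}{\int_{\rho_1}^{\rho_2}e^{-2\phi/h}|v_{h,m}|^2dr}\leq C\,h^N f_{1,h}(m).$$ Consequently, for every sufficiently small fixed $\delta>0$, the same estimate holds with the numerator replaced by $\int_{\rho_1+\delta}^{\rho_2-\delta}e^{-2\phi/h}|v_{h,m}|^2dr$ (for $h$ small enough depending on $\delta$).
   Context: $0<\rho_1<\rho_2$; $B\in C^\infty([\rho_1,\rho_2])$ with $\min B>0$; $\phi$ solves $\phi''+\phi'/r=B$ on $(\rho_1,\rho_2)$, $\phi(\rho_1)=\phi(\rho_2)=0$; $\phi_{\min}=\min\phi<0$ attained at a unique $r_{\min}\in(\rho_1,\rho_2)$. $\lambda_{1,m}(h)$ is the lowest eigenvalue of $-h^2(\partial_r^2+\frac{1}{4r^2})+(\frac{hm}{r}-\phi')^2-hB$ on $L^2((\rho_1,\rho_2);dr)$ with domain $H^1_0\cap H^2$, and $f_{1,h}(m)=h^{-1/2}e^{-2\phi_{\min}/h}\lambda_{1,m}(h)$. *)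

theory Defs
  imports "HOL-Analysis.Analysis"
begin

text \<open>C-infinity on the closed interval [a,b]: a tower of one-sided derivatives.\<close>
definition smooth_on_interval :: "real \<Rightarrow> real \<Rightarrow> (real \<Rightarrow> real) \<Rightarrow> bool" where
  "smooth_on_interval a b f \<longleftrightarrow>
     (\<exists>D :: nat \<Rightarrow> real \<Rightarrow> real. (\<forall>x\<in>{a..b}. D 0 x = f x) \<and>
        (\<forall>k. \<forall>x\<in>{a..b}. (D k has_real_derivative D (Suc k) x) (at x within {a..b})))"

text \<open>(lam, v) is an eigenpair of
  -h^2 (d^2/dr^2 + 1/(4 r^2)) + (h m / r - phi')^2 - h B  on (rho1, rho2)
  with Dirichlet boundary conditions; v is taken C^2 on the closed interval
  (eigenfunctions in H^1_0 \<inter> H^2 are smooth up to the boundary by elliptic regularity).\<close>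
definition is_eigenpair ::
  "real \<Rightarrow> real \<Rightarrow> (real \<Rightarrow> real) \<Rightarrow> (real \<Rightarrow> real) \<Rightarrow> real \<Rightarrow> real \<Rightarrow> real
   \<Rightarrow> (real \<Rightarrow> complex) \<Rightarrow> bool" where
  "is_eigenpair \<rho>1 \<rho>2 B dphi h m lam v \<longleftrightarrow>
     (\<exists>v1 v2 :: real \<Rightarrow> complex.
        (\<forall>x\<in>{\<rho>1..\<rho>2}. (v has_vector_derivative v1 x) (at x within {\<rho>1..\<rho>2}) \<and>
                         (v1 has_vector_derivative v2 x) (at x within {\<rho>1..\<rho>2})) \<and>
        continuous_on {\<rho>1..\<rho>2} v2 \<and>
        v \<rho>1 = 0 \<and> v \<rho>2 = 0 \<and> (\<exists>x\<in>{\<rho>1..\<rho>2}. v x \<noteq> 0) \<and>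
        (\<forall>x\<in>{\<rho>1<..<\<rho>2}.
           - (h^2) *\<^sub>R (v2 x + (1 / (4 * x^2)) *\<^sub>R v x)
           + ((h * m / x - dphi x)^2 - h * B x) *\<^sub>R v x = lam *\<^sub>R v x))"

definition lowest_eig ::
  "real \<Rightarrow> real \<Rightarrow> (real \<Rightarrow> real) \<Rightarrow> (real \<Rightarrow> real) \<Rightarrow> real \<Rightarrow> real \<Rightarrow> real" where
  "lowest_eig \<rho>1 \<rho>2 B dphi h m = Inf {lam. \<exists>v. is_eigenpair \<rho>1 \<rho>2 B dphi h m lam v}"

definition wmass :: "(real \<Rightarrow> real) \<Rightarrow> real \<Rightarrow> (real \<Rightarrow> complex) \<Rightarrow> real \<Rightarrow> real \<Rightarrow> real" where
  "wmass phi h v a b = integral {a..b} (\<lambda>r. exp (- 2 * phi r / h) * (cmod (v r))^2)"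

definition f1h ::
  "real \<Rightarrow> real \<Rightarrow> (real \<Rightarrow> real) \<Rightarrow> (real \<Rightarrow> real) \<Rightarrow> real \<Rightarrow> real \<Rightarrow> real \<Rightarrow> real" where
  "f1h \<rho>1 \<rho>2 B dphi phimin h m =
     h powr (-1/2) * exp (- 2 * phimin / h) * lowest_eig \<rho>1 \<rho>2 B dphi h m"

end

theory Submission
  imports Defs "HOL-Real_Asymp.Real_Asymp"
begin

(* With g = phi' - h (m + 1/2) / r the operator factors as L^* L with L = h d/dr + g.  For a
   real component a of an eigenfunction, w = L a satisfies (a w)' = (w^2 - lam a^2) / h, hence
   lam * int a^2 = int w^2 >= 0, and e = r^(-(m + 1/2)) e^(phi/h) turns L a = w into
   (e a)' = e w / h.  Integrating the latter between r and the endpoint on whose side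
   r^(-(m + 1/2)) is smaller, using phi <= 0 and Cauchy-Schwarz, gives the pointwise bound
   |v r|^2 <= (rho2 - rho1) lam ||v||^2 e^(-2 phi r / h) / h^2.
   The flux r phi' has derivative r B > 0 and vanishes at r_min, so phi - phi_min is comparable
   to (r - r_min)^2.  Consequently the weighted mass outside |r - r_min| <= h^alpha is at most
   a fraction of order lam e^(-2 phi_min / h) e^(-c h^(2 alpha - 1)) / h^2 of the total, and
   e^(-c h^(2 alpha - 1)) beats every power of h because alpha < 1/2. *)

section \<open>Elementary real analysis\<close>

lemma quadratic_nonneg_imp_discriminant_le:
  fixes a b c :: real
  assumes nonneg: "\<And>t. 0 \<le> a * t^2 + 2 * b * t + c" and "0 \<le> a"
  shows "b^2 \<le> a * c"
proof (cases "a = 0")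
  case True
  have "b = 0"
  proof (rule ccontr)
    assume "b \<noteq> 0"
    then have "a * (- (\<bar>c\<bar> + 1) / (2 * b))^2 + 2 * b * (- (\<bar>c\<bar> + 1) / (2 * b)) + c < 0"
      using True by simp
    then show False using nonneg not_le by blast
  qed
  then show ?thesis using True by simp
next
  case False
  then have "a > 0" using \<open>0 \<le> a\<close> by simp
  have "0 \<le> a * (- b / a)^2 + 2 * b * (- b / a) + c" by (rule nonneg)
  also have "\<dots> = (a * c - b^2) / a" using \<open>a > 0\<close> by (simp add: power2_eq_square field_simps)
  finally show ?thesis using \<open>a > 0\<close> by (simp add: zero_le_divide_iff)
qed

lemma Cauchy_Schwarz_integral:
  fixes f g :: "'a::euclidean_space \<Rightarrow> real"
  assumes ff: "(\<lambda>x. (f x)^2) integrable_on S" and gg: "(\<lambda>x. (g x)^2) integrable_on S"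
    and fg: "(\<lambda>x. f x * g x) integrable_on S"
  shows "(integral S (\<lambda>x. f x * g x))^2 \<le> integral S (\<lambda>x. (f x)^2) * integral S (\<lambda>x. (g x)^2)"
proof (rule quadratic_nonneg_imp_discriminant_le)
  fix t :: real
  have square: "(\<lambda>x. (t * f x + g x)^2) = (\<lambda>x. t^2 * (f x)^2 + 2 * t * (f x * g x) + (g x)^2)"
    by (simp add: fun_eq_iff power2_eq_square algebra_simps)
  have "((\<lambda>x. (t * f x + g x)^2) has_integral
      t^2 * integral S (\<lambda>x. (f x)^2) + 2 * t * integral S (\<lambda>x. f x * g x)
        + integral S (\<lambda>x. (g x)^2)) S"
    unfolding square using ff gg fg
    by (intro has_integral_add has_integral_mult_right integrable_integral)
  then have "0 \<le> t^2 * integral S (\<lambda>x. (f x)^2) + 2 * t * integral S (\<lambda>x. f x * g x)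
      + integral S (\<lambda>x. (g x)^2)"
    by (rule has_integral_nonneg) simp
  then show "0 \<le> integral S (\<lambda>x. (f x)^2) * t^2 + 2 * integral S (\<lambda>x. f x * g x) * t
      + integral S (\<lambda>x. (g x)^2)"
    by (simp add: algebra_simps)
qed (use ff in \<open>simp add: integral_nonneg\<close>)

lemma signed_deriv_imp_mono_sides:
  fixes F F' :: "real \<Rightarrow> real"
  assumes cont: "continuous_on {a..b} F"
    and deriv: "\<And>t. t \<in> {a<..<b} \<Longrightarrow> (F has_real_derivative F' t) (at t)"
    and sign: "\<And>t. t \<in> {a<..<b} \<Longrightarrow> 0 \<le> (t - r) * F' t"
    and xy: "a \<le> x" "x \<le> y" "y \<le> b"
  shows "r \<le> x \<Longrightarrow> F x \<le> F y" and "y \<le> r \<Longrightarrow> F y \<le> F x"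
proof -
  have sub: "continuous_on {x..y} F" using cont by (rule continuous_on_subset) (use xy in auto)
  show "F x \<le> F y" if "r \<le> x"
  proof (rule DERIV_nonneg_imp_increasing_open[OF xy(2) _ sub])
    fix t assume "x < t" "t < y"
    with xy have t: "t \<in> {a<..<b}" by auto
    with sign[OF t] \<open>x < t\<close> that have "0 \<le> F' t" by (simp add: zero_le_mult_iff)
    then show "\<exists>y. (F has_real_derivative y) (at t) \<and> 0 \<le> y" using deriv[OF t] by blast
  qed
  show "F y \<le> F x" if "y \<le> r"
  proof (rule DERIV_nonpos_imp_decreasing_open[OF xy(2) _ sub])
    fix t assume "x < t" "t < y"
    with xy have t: "t \<in> {a<..<b}" by auto
    with sign[OF t] \<open>t < y\<close> that have "F' t \<le> 0" by (simp add: zero_le_mult_iff)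
    then show "\<exists>y. (F has_real_derivative y) (at t) \<and> y \<le> 0" using deriv[OF t] by blast
  qed
qed

lemma signed_deriv_imp_quadratic_lower_bound:
  fixes F F' :: "real \<Rightarrow> real"
  assumes cont: "continuous_on {a..b} F"
    and deriv: "\<And>t. t \<in> {a<..<b} \<Longrightarrow> (F has_real_derivative F' t) (at t)"
    and sign: "\<And>t. t \<in> {a<..<b} \<Longrightarrow> k * (t - r)^2 \<le> (t - r) * F' t"
    and r: "r \<in> {a..b}" and x: "x \<in> {a..b}"
  shows "F r + k / 2 * (x - r)^2 \<le> F x"
proof -
  define H where "H t = F t - k / 2 * (t - r)^2" for t
  have H_cont: "continuous_on {a..b} H"
    unfolding H_def using cont by (intro continuous_intros)
  have H_deriv: "(H has_real_derivative F' t - k * (t - r)) (at t)" if "t \<in> {a<..<b}" for t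
    unfolding H_def by (auto intro!: derivative_eq_intros deriv[OF that])
  have H_sign: "0 \<le> (t - r) * (F' t - k * (t - r))" if "t \<in> {a<..<b}" for t
    using sign[OF that] by (simp add: power2_eq_square algebra_simps)
  note H_mono = signed_deriv_imp_mono_sides[OF H_cont H_deriv H_sign]
  have "H r \<le> H x"
    using H_mono(1)[of r x] H_mono(2)[of x r] r x by (cases "r \<le> x") auto
  then show ?thesis by (simp add: H_def)
qed

lemma deriv_bounds_imp_secant_bounds:
  fixes F F' :: "real \<Rightarrow> real"
  assumes cont: "continuous_on {a..b} F"
    and deriv: "\<And>t. t \<in> {a<..<b} \<Longrightarrow> (F has_real_derivative F' t) (at t)"
    and bounds: "\<And>t. t \<in> {a<..<b} \<Longrightarrow> k \<le> F' t \<and> F' t \<le> k'"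
    and r: "r \<in> {a..b}" and x: "x \<in> {a..b}"
  shows "k * (x - r)^2 \<le> (x - r) * (F x - F r) \<and> (x - r) * (F x - F r) \<le> k' * (x - r)^2"
proof -
  have secant: "k * (q - p)^2 \<le> (q - p) * (F q - F p) \<and> (q - p) * (F q - F p) \<le> k' * (q - p)^2"
    if "a \<le> p" "p < q" "q \<le> b" for p q
  proof -
    have "F differentiable (at t)" if "p < t" "t < q" for t
      using deriv[of t] that \<open>a \<le> p\<close> \<open>q \<le> b\<close> by (auto simp: real_differentiable_def)
    moreover have "continuous_on {p..q} F"
      using cont by (rule continuous_on_subset) (use that in auto)
    ultimately obtain l z where z: "p < z" "z < q" "(F has_real_derivative l) (at z)"
      and increment: "F q - F p = (q - p) * l"
      using MVT[OF \<open>p < q\<close>] by blast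
    have zab: "z \<in> {a<..<b}" using z that by auto
    have "(q - p) * (F q - F p) = F' z * (q - p)^2"
      using increment DERIV_unique[OF z(3) deriv[OF zab]] by (simp add: power2_eq_square)
    then show ?thesis using bounds[OF zab] by (simp add: mult_right_mono)
  qed
  consider "x = r" | "r < x" | "x < r" by linarith
  then show ?thesis
  proof cases
    case 2
    then show ?thesis using secant[of r x] r x by simp
  next
    case 3
    have "(x - r)^2 = (r - x)^2" "(x - r) * (F x - F r) = (r - x) * (F r - F x)"
      by (simp_all add: power2_eq_square algebra_simps)
    then show ?thesis using secant[of x r] r x 3 by simp
  qed simp
qed

lemma has_real_derivative_at_interior:
  assumes "\<forall>x\<in>{a..b}. (f has_real_derivative f' x) (at x within {a..b})" and "x \<in> {a<..<b}"
  shows "(f has_real_derivative f' x) (at x)"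
  using assms at_within_Icc_at[of a x b]
  by (metis atLeastAtMost_iff greaterThanLessThan_iff less_imp_le)

section \<open>The potential well\<close>

lemma radial_flux_bounds:
  fixes B dphi ddphi :: "real \<Rightarrow> real"
  assumes r1: "0 < \<rho>1" and r12: "\<rho>1 < \<rho>2"
    and B_cont: "continuous_on {\<rho>1..\<rho>2} B" and B_pos: "\<forall>x\<in>{\<rho>1..\<rho>2}. B x > 0"
    and ddphi: "\<forall>x\<in>{\<rho>1..\<rho>2}. (dphi has_real_derivative ddphi x) (at x within {\<rho>1..\<rho>2})"
    and eq: "\<forall>x\<in>{\<rho>1<..<\<rho>2}. ddphi x + dphi x / x = B x"
    and rmin: "rmin \<in> {\<rho>1..\<rho>2}" and crit: "dphi rmin = 0"
  obtains k k' where "0 < k" "0 < k'"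
    "\<And>x. x \<in> {\<rho>1..\<rho>2} \<Longrightarrow>
      k * (x - rmin)^2 \<le> (x - rmin) * dphi x \<and> (x - rmin) * dphi x \<le> k' * (x - rmin)^2"
proof -
  let ?S = "{\<rho>1..\<rho>2}"
  have compact: "compact ?S" "?S \<noteq> {}" using r12 by auto
  have cont: "continuous_on ?S (\<lambda>x. x * B x)" using B_cont by (intro continuous_intros)
  obtain xl where xl: "xl \<in> ?S" "\<forall>y\<in>?S. xl * B xl \<le> y * B y"
    using continuous_attains_inf[OF compact cont] by blast
  obtain xu where xu: "xu \<in> ?S" "\<forall>y\<in>?S. y * B y \<le> xu * B xu"
    using continuous_attains_sup[OF compact cont] by blast
  define k1 k2 where "k1 = xl * B xl" and "k2 = xu * B xu"
  have k_pos: "0 < k1" "0 < k2" using xl(1) xu(1) r1 B_pos by (auto simp: k1_def k2_def)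
  have flux_deriv: "((\<lambda>x. x * dphi x) has_real_derivative x * B x) (at x)"
    if x: "x \<in> {\<rho>1<..<\<rho>2}" for x
  proof -
    have "dphi x + ddphi x * x = x * B x"
      using eq x r1 by (auto simp: field_simps)
    then show ?thesis
      by (auto intro!: derivative_eq_intros has_real_derivative_at_interior[OF ddphi x])
  qed
  have flux_cont: "continuous_on ?S (\<lambda>x. x * dphi x)"
    using ddphi by (intro continuous_intros DERIV_continuous_on) auto
  have flux: "k1 * (x - rmin)^2 \<le> (x - rmin) * (x * dphi x) \<and>
      (x - rmin) * (x * dphi x) \<le> k2 * (x - rmin)^2"
    if x: "x \<in> ?S" for x
    using deriv_bounds_imp_secant_bounds[OF flux_cont flux_deriv _ rmin x, of k1 k2] xl xu crit
    by (auto simp: k1_def k2_def)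
  show ?thesis
  proof (rule that[of "k1 / \<rho>2" "k2 / \<rho>1"])
    show "0 < k1 / \<rho>2" "0 < k2 / \<rho>1" using k_pos r1 r12 by auto
    fix x assume x: "x \<in> ?S"
    then have "0 < x" using r1 by simp
    have flux': "k1 * (x - rmin)^2 \<le> x * ((x - rmin) * dphi x)"
      "x * ((x - rmin) * dphi x) \<le> k2 * (x - rmin)^2"
      using flux[OF x] by (simp_all add: mult.left_commute)
    have "k1 / \<rho>2 * (x - rmin)^2 \<le> k1 / x * (x - rmin)^2"
      using x k_pos \<open>0 < x\<close> by (intro mult_right_mono divide_left_mono) auto
    also have "\<dots> \<le> (x - rmin) * dphi x"
      using flux'(1) \<open>0 < x\<close> by (simp add: pos_divide_le_eq mult_ac)
    finally have lower: "k1 / \<rho>2 * (x - rmin)^2 \<le> (x - rmin) * dphi x" .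
    have "(x - rmin) * dphi x \<le> k2 / x * (x - rmin)^2"
      using flux'(2) \<open>0 < x\<close> by (simp add: pos_le_divide_eq mult_ac)
    also have "\<dots> \<le> k2 / \<rho>1 * (x - rmin)^2"
      using x k_pos r1 by (intro mult_right_mono divide_left_mono) auto
    finally show "k1 / \<rho>2 * (x - rmin)^2 \<le> (x - rmin) * dphi x \<and>
        (x - rmin) * dphi x \<le> k2 / \<rho>1 * (x - rmin)^2"
      using lower by simp
  qed
qed

lemma potential_well_bounds:
  fixes B phi dphi ddphi :: "real \<Rightarrow> real"
  assumes r1: "0 < \<rho>1" and r12: "\<rho>1 < \<rho>2"
    and B_cont: "continuous_on {\<rho>1..\<rho>2} B" and B_pos: "\<forall>x\<in>{\<rho>1..\<rho>2}. B x > 0"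
    and dphi: "\<forall>x\<in>{\<rho>1..\<rho>2}. (phi has_real_derivative dphi x) (at x within {\<rho>1..\<rho>2})"
    and ddphi: "\<forall>x\<in>{\<rho>1..\<rho>2}. (dphi has_real_derivative ddphi x) (at x within {\<rho>1..\<rho>2})"
    and eq: "\<forall>x\<in>{\<rho>1<..<\<rho>2}. ddphi x + dphi x / x = B x"
    and phi_bdry: "phi \<rho>1 = 0" "phi \<rho>2 = 0"
    and rmin: "rmin \<in> {\<rho>1<..<\<rho>2}"
    and min: "\<forall>x\<in>{\<rho>1..\<rho>2}. x \<noteq> rmin \<longrightarrow> phi rmin < phi x"
  obtains c c' where "0 < c" "0 < c'"
    "\<And>x. x \<in> {\<rho>1..\<rho>2} \<Longrightarrow>
      c * (x - rmin)^2 \<le> phi x - phi rmin \<and> phi x - phi rmin \<le> c' * (x - rmin)^2"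
    "\<And>x. x \<in> {\<rho>1..\<rho>2} \<Longrightarrow> phi x \<le> 0"
proof -
  let ?S = "{\<rho>1..\<rho>2}"
  note dphi_at = has_real_derivative_at_interior[OF dphi]
  have phi_cont: "continuous_on ?S phi" using dphi by (intro DERIV_continuous_on) auto
  have crit: "dphi rmin = 0"
  proof (rule DERIV_local_min[OF dphi_at[OF rmin]])
    show "0 < min (rmin - \<rho>1) (\<rho>2 - rmin)" using rmin by auto
    show "\<forall>y. \<bar>rmin - y\<bar> < min (rmin - \<rho>1) (\<rho>2 - rmin) \<longrightarrow> phi rmin \<le> phi y"
      using min by (force simp: abs_less_iff)
  qed
  obtain k k' where k: "0 < k" "0 < k'" and flux:
    "\<And>x. x \<in> ?S \<Longrightarrow> k * (x - rmin)^2 \<le> (x - rmin) * dphi x \<and> (x - rmin) * dphi x \<le> k' * (x - rmin)^2"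
    using radial_flux_bounds[OF r1 r12 B_cont B_pos ddphi eq _ crit] rmin by auto
  show ?thesis
  proof (rule that[of "k / 2" "k' / 2"])
    show "0 < k / 2" "0 < k' / 2" using k by auto
    fix x assume x: "x \<in> ?S"
    have "phi rmin + k / 2 * (x - rmin)^2 \<le> phi x"
      by (rule signed_deriv_imp_quadratic_lower_bound[OF phi_cont dphi_at _ _ x])
         (use flux rmin in auto)
    moreover have "- phi rmin + - k' / 2 * (x - rmin)^2 \<le> - phi x"
    proof (rule signed_deriv_imp_quadratic_lower_bound[of _ _ "\<lambda>t. - phi t" "\<lambda>t. - dphi t"])
      show "continuous_on ?S (\<lambda>t. - phi t)" using phi_cont by (rule continuous_on_minus)
      show "((\<lambda>t. - phi t) has_real_derivative - dphi t) (at t)" if "t \<in> {\<rho>1<..<\<rho>2}" for t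
        using DERIV_minus[OF dphi_at[OF that]] .
      show "- k' * (t - rmin)^2 \<le> (t - rmin) * - dphi t" if "t \<in> {\<rho>1<..<\<rho>2}" for t
        using flux[of t] that by simp
    qed (use rmin x in auto)
    ultimately show
      "k / 2 * (x - rmin)^2 \<le> phi x - phi rmin \<and> phi x - phi rmin \<le> k' / 2 * (x - rmin)^2"
      by simp
    have dphi_sign: "0 \<le> (t - rmin) * dphi t" if "t \<in> {\<rho>1<..<\<rho>2}" for t
    proof -
      have "0 \<le> k * (t - rmin)^2" using k by simp
      also have "\<dots> \<le> (t - rmin) * dphi t" using flux[of t] that by auto
      finally show ?thesis .
    qed
    note phi_mono = signed_deriv_imp_mono_sides[OF phi_cont dphi_at dphi_sign]
    show "phi x \<le> 0"
      using phi_mono(1)[of x \<rho>2] phi_mono(2)[of \<rho>1 x] x phi_bdry by (cases "rmin \<le> x") auto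
  qed
qed

section \<open>Pointwise bounds for eigenfunctions\<close>

lemma increment_le_Cauchy_Schwarz:
  fixes u e k :: "real \<Rightarrow> real"
  assumes cd: "c \<le> d"
    and cont: "continuous_on {c..d} u" "continuous_on {c..d} e" "continuous_on {c..d} k"
    and deriv: "\<And>t. t \<in> {c<..<d} \<Longrightarrow> (u has_real_derivative e t * k t) (at t)"
    and e_bound: "\<And>t. t \<in> {c..d} \<Longrightarrow> \<bar>e t\<bar> \<le> E"
  shows "(u d - u c)^2 \<le> (d - c) * E^2 * integral {c..d} (\<lambda>t. (k t)^2)"
proof -
  have "((\<lambda>t. e t * k t) has_integral u d - u c) {c..d}"
    using cd cont deriv
    by (intro fundamental_theorem_of_calculus_interior)
       (auto simp: has_real_derivative_iff_has_vector_derivative[symmetric])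
  then have "(u d - u c)^2 = (integral {c..d} (\<lambda>t. e t * k t))^2"
    by (simp add: integral_unique)
  also have "\<dots> \<le> integral {c..d} (\<lambda>t. (e t)^2) * integral {c..d} (\<lambda>t. (k t)^2)"
    using cont by (intro Cauchy_Schwarz_integral integrable_continuous_interval continuous_intros)
  also have "\<dots> \<le> integral {c..d} (\<lambda>t. E^2) * integral {c..d} (\<lambda>t. (k t)^2)"
  proof (intro mult_right_mono integral_le)
    show "(e t)^2 \<le> E^2" if "t \<in> {c..d}" for t
      using power_mono[OF e_bound[OF that], of 2] by simp
  qed (use cont in \<open>auto intro!: integrable_continuous_interval continuous_intros integral_nonneg\<close>)
  finally show ?thesis using cd by simp
qed

lemma powr_bounded_side:
  fixes q :: real
  assumes "0 < \<rho>1" and x: "x \<in> {\<rho>1..\<rho>2}"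
  obtains c d where "c = x \<and> d = \<rho>2 \<or> c = \<rho>1 \<and> d = x" and "\<And>s. s \<in> {c..d} \<Longrightarrow> s powr q \<le> x powr q"
proof (cases "q \<le> 0")
  case True
  show ?thesis
    by (rule that[of x \<rho>2]) (use True x \<open>0 < \<rho>1\<close> in \<open>auto intro: powr_mono2'\<close>)
next
  case False
  show ?thesis
    by (rule that[of \<rho>1 x]) (use False x \<open>0 < \<rho>1\<close> in \<open>auto intro: powr_mono2\<close>)
qed

locale radial_solution =
  fixes \<rho>1 \<rho>2 h m lam :: real and B dphi ddphi a a' a'' :: "real \<Rightarrow> real"
  assumes r1: "0 < \<rho>1" and r12: "\<rho>1 < \<rho>2" and h_pos: "0 < h"
    and ddphi: "\<forall>x\<in>{\<rho>1..\<rho>2}. (dphi has_real_derivative ddphi x) (at x within {\<rho>1..\<rho>2})"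
    and eq: "\<forall>x\<in>{\<rho>1<..<\<rho>2}. ddphi x + dphi x / x = B x"
    and a_deriv: "\<forall>x\<in>{\<rho>1..\<rho>2}. (a has_real_derivative a' x) (at x within {\<rho>1..\<rho>2})"
    and a'_deriv: "\<forall>x\<in>{\<rho>1..\<rho>2}. (a' has_real_derivative a'' x) (at x within {\<rho>1..\<rho>2})"
    and a_bdry: "a \<rho>1 = 0" "a \<rho>2 = 0"
    and ode: "\<forall>x\<in>{\<rho>1<..<\<rho>2}. - (h^2) * (a'' x + (1 / (4 * x^2)) * a x)
                + ((h * m / x - dphi x)^2 - h * B x) * a x = lam * a x"
begin

definition g :: "real \<Rightarrow> real" where "g x = dphi x - h * (m + 1/2) / x"

definition w :: "real \<Rightarrow> real" where "w x = h * a' x + g x * a x"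

lemma continuous_on_a: "continuous_on {\<rho>1..\<rho>2} a"
  using a_deriv by (intro DERIV_continuous_on) auto

lemma continuous_on_w: "continuous_on {\<rho>1..\<rho>2} w"
proof -
  have "continuous_on {\<rho>1..\<rho>2} dphi" "continuous_on {\<rho>1..\<rho>2} a'"
    using ddphi a'_deriv by (auto intro!: DERIV_continuous_on)
  then show ?thesis
    unfolding w_def g_def using continuous_on_a r1 by (intro continuous_intros) auto
qed

lemma g_deriv:
  assumes x: "x \<in> {\<rho>1<..<\<rho>2}"
  shows "(g has_real_derivative B x - dphi x / x + h * (m + 1/2) / x^2) (at x)"
proof -
  have "x \<noteq> 0" using x r1 by auto
  have "ddphi x = B x - dphi x / x" using eq x by (simp add: algebra_simps)
  then show ?thesis
    unfolding g_def[abs_def] using \<open>x \<noteq> 0\<close>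
    by (auto intro!: derivative_eq_intros has_real_derivative_at_interior[OF ddphi x]
        simp: power2_eq_square)
qed

lemma potential_factorization:
  assumes "x \<noteq> 0"
  shows "(g x)^2 - h * (B x - dphi x / x + h * (m + 1/2) / x^2)
    = (h * m / x - dphi x)^2 - h * B x - h^2 / (4 * x^2)"
  using assms by (simp add: g_def power2_eq_square field_simps)

lemma h_ne_0: "h \<noteq> 0"
  using h_pos by simp

lemma w_deriv:
  assumes x: "x \<in> {\<rho>1<..<\<rho>2}"
  shows "(w has_real_derivative (g x * w x - lam * a x) / h) (at x)"
proof -
  let ?g' = "B x - dphi x / x + h * (m + 1/2) / x^2"
  have "x \<noteq> 0" using x r1 by auto
  have ode_x: "h^2 * a'' x = ((h * m / x - dphi x)^2 - h * B x - h^2 / (4 * x^2)) * a x - lam * a x"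
    using ode x by (simp add: algebra_simps)
  have "h * (h * a'' x + ?g' * a x + g x * a' x) = h^2 * a'' x + h * ?g' * a x + h * g x * a' x"
    by (simp add: power2_eq_square algebra_simps)
  also have "\<dots> = ((g x)^2 - h * ?g') * a x - lam * a x + h * ?g' * a x + h * g x * a' x"
    using ode_x potential_factorization[OF \<open>x \<noteq> 0\<close>] by simp
  also have "\<dots> = g x * w x - lam * a x"
    by (simp add: w_def power2_eq_square algebra_simps)
  finally have "h * a'' x + ?g' * a x + g x * a' x = (g x * w x - lam * a x) / h"
    using h_ne_0 by (simp add: eq_divide_eq mult.commute)
  moreover have "(w has_real_derivative h * a'' x + ?g' * a x + g x * a' x) (at x)"
    unfolding w_def[abs_def]
    by (auto intro!: derivative_eq_intros g_deriv[OF x]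
        has_real_derivative_at_interior[OF a_deriv x]
        has_real_derivative_at_interior[OF a'_deriv x])
  ultimately show ?thesis by simp
qed

lemma a_w_deriv:
  assumes x: "x \<in> {\<rho>1<..<\<rho>2}"
  shows "((\<lambda>x. a x * w x) has_real_derivative ((w x)^2 - lam * (a x)^2) / h) (at x)"
proof -
  have "h * (a' x * w x) + a x * (g x * w x - lam * a x) = (w x)^2 - lam * (a x)^2"
    by (simp add: w_def power2_eq_square algebra_simps)
  then have product:
    "a' x * w x + (g x * w x - lam * a x) / h * a x = ((w x)^2 - lam * (a x)^2) / h"
    using h_ne_0 by (simp add: field_simps)
  show ?thesis
    using DERIV_mult[OF has_real_derivative_at_interior[OF a_deriv x] w_deriv[OF x]]
    unfolding product .
qed

lemma energy_identity: "integral {\<rho>1..\<rho>2} (\<lambda>x. (w x)^2) = lam * integral {\<rho>1..\<rho>2} (\<lambda>x. (a x)^2)"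
proof -
  have "((\<lambda>x. ((w x)^2 - lam * (a x)^2) / h) has_integral a \<rho>2 * w \<rho>2 - a \<rho>1 * w \<rho>1) {\<rho>1..\<rho>2}"
  proof (rule fundamental_theorem_of_calculus_interior)
    show "continuous_on {\<rho>1..\<rho>2} (\<lambda>x. a x * w x)"
      using continuous_on_a continuous_on_w by (rule continuous_on_mult)
    show "((\<lambda>x. a x * w x) has_vector_derivative ((w x)^2 - lam * (a x)^2) / h) (at x)"
      if "x \<in> {\<rho>1<..<\<rho>2}" for x
      using a_w_deriv[OF that] by (simp add: has_real_derivative_iff_has_vector_derivative)
  qed (use r12 in simp)
  then have "((\<lambda>x. h * (((w x)^2 - lam * (a x)^2) / h)) has_integral h * 0) {\<rho>1..\<rho>2}"
    unfolding a_bdry by (intro has_integral_mult_right) simp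
  then have "integral {\<rho>1..\<rho>2} (\<lambda>x. (w x)^2 - lam * (a x)^2) = 0"
    using h_ne_0 by (simp add: integral_unique)
  moreover have "(\<lambda>x. (w x)^2) integrable_on {\<rho>1..\<rho>2}" "(\<lambda>x. lam * (a x)^2) integrable_on {\<rho>1..\<rho>2}"
    using continuous_on_a continuous_on_w
    by (simp_all add: integrable_continuous_interval continuous_on_mult continuous_on_power)
  ultimately show ?thesis by (simp add: integral_diff)
qed

lemma integrating_factor_deriv:
  fixes phi :: "real \<Rightarrow> real"
  assumes dphi: "\<forall>x\<in>{\<rho>1..\<rho>2}. (phi has_real_derivative dphi x) (at x within {\<rho>1..\<rho>2})"
    and s: "s \<in> {\<rho>1<..<\<rho>2}"
  shows "((\<lambda>s. s powr - (m + 1/2) * exp (phi s / h) * a s) has_real_derivative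
      s powr - (m + 1/2) * exp (phi s / h) * (w s / h)) (at s)"
proof -
  define q where "q = - (m + 1/2)"
  have "0 < s" using s r1 by simp
  have "((\<lambda>s. exp (phi s / h)) has_real_derivative exp (phi s / h) * (dphi s / h)) (at s)"
    using h_ne_0 by (auto intro!: derivative_eq_intros has_real_derivative_at_interior[OF dphi s])
  note product = DERIV_mult[OF DERIV_mult[OF has_real_derivative_powr[OF \<open>0 < s\<close>] this]
      has_real_derivative_at_interior[OF a_deriv s]]
  have powr_pred: "s powr (q - 1) = s powr q / s" using \<open>0 < s\<close> by (simp add: powr_diff)
  have "h * q / s = - (h * (m + 1/2) / s)"
    unfolding q_def by (simp only: mult_minus_right minus_divide_left)
  then have g_q: "g s = dphi s + h * q / s" by (simp add: g_def)
  have "((\<lambda>s. s powr q * exp (phi s / h) * a s) has_real_derivative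
      s powr q * exp (phi s / h) * (w s / h)) (at s)"
    using \<open>0 < s\<close> h_ne_0
    by (intro DERIV_cong[OF product]) (simp add: w_def g_q powr_pred field_simps)
  then show ?thesis by (simp only: q_def)
qed

lemma pointwise_bound:
  fixes phi :: "real \<Rightarrow> real"
  assumes dphi: "\<forall>x\<in>{\<rho>1..\<rho>2}. (phi has_real_derivative dphi x) (at x within {\<rho>1..\<rho>2})"
    and phi_nonpos: "\<forall>x\<in>{\<rho>1..\<rho>2}. phi x \<le> 0" and x: "x \<in> {\<rho>1..\<rho>2}"
  shows "(a x)^2 \<le> (\<rho>2 - \<rho>1) * exp (- 2 * phi x / h) * integral {\<rho>1..\<rho>2} (\<lambda>s. (w s)^2) / h^2"
proof -
  let ?S = "{\<rho>1..\<rho>2}" and ?I = "\<lambda>S. integral S (\<lambda>s. (w s / h)^2)"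
  define q where "q = - (m + 1/2)"
  define e where "e s = s powr q * exp (phi s / h)" for s
  define u where "u s = e s * a s" for s
  have "0 < x" using x r1 by simp
  have phi_cont: "continuous_on ?S phi" using dphi by (intro DERIV_continuous_on) auto
  have e_cont: "continuous_on ?S e"
    unfolding e_def using phi_cont r1 h_ne_0 by (intro continuous_intros) auto
  have u_cont: "continuous_on ?S u"
    unfolding u_def using e_cont continuous_on_a by (rule continuous_on_mult)
  have wh_cont: "continuous_on ?S (\<lambda>s. w s / h)"
    using continuous_on_w by (rule continuous_on_divide) (auto simp: h_ne_0)
  obtain c d where side: "c = x \<and> d = \<rho>2 \<or> c = \<rho>1 \<and> d = x"
    and powr_le: "\<And>s. s \<in> {c..d} \<Longrightarrow> s powr q \<le> x powr q"
    using powr_bounded_side[OF r1 x] by blast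
  have cd: "\<rho>1 \<le> c" "c \<le> d" "d \<le> \<rho>2" and sub: "{c..d} \<subseteq> ?S" using side x by auto
  have e_bound: "\<bar>e s\<bar> \<le> x powr q" if "s \<in> {c..d}" for s
  proof -
    have "exp (phi s / h) \<le> 1" using phi_nonpos that sub h_pos by (auto simp: divide_nonpos_pos)
    then have "\<bar>e s\<bar> \<le> s powr q" unfolding e_def by (simp add: mult_left_le)
    then show ?thesis using powr_le[OF that] by linarith
  qed
  have "(x powr q)^2 * (exp (phi x / h)^2 * (a x)^2) = (u d - u c)^2"
    using side a_bdry by (auto simp: u_def e_def power_mult_distrib power2_commute)
  also have "\<dots> \<le> (d - c) * (x powr q)^2 * ?I {c..d}"
  proof (rule increment_le_Cauchy_Schwarz[where e = e and k = "\<lambda>s. w s / h"])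
    show "continuous_on {c..d} u" "continuous_on {c..d} e" "continuous_on {c..d} (\<lambda>s. w s / h)"
      using u_cont e_cont wh_cont sub by (auto intro: continuous_on_subset)
    show "(u has_real_derivative e t * (w t / h)) (at t)" if "t \<in> {c<..<d}" for t
      using integrating_factor_deriv[OF dphi, of t] that cd
      unfolding u_def[abs_def] e_def[abs_def] q_def by simp
  qed (use cd e_bound in auto)
  also have "\<dots> \<le> (x powr q)^2 * ((\<rho>2 - \<rho>1) * ?I ?S)"
  proof -
    have "(\<lambda>s. (w s / h)^2) integrable_on ?S"
      using wh_cont by (simp add: integrable_continuous_interval continuous_on_power)
    then have "?I {c..d} \<le> ?I ?S" and "0 \<le> ?I {c..d}"
      using sub integrable_on_subinterval[of _ ?S c d]
      by (auto intro!: integral_subset_le integral_nonneg)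
    then show ?thesis using cd by (simp add: mult_mono mult_ac)
  qed
  finally have "exp (phi x / h)^2 * (a x)^2 \<le> (\<rho>2 - \<rho>1) * ?I ?S"
    using \<open>0 < x\<close> by (simp add: mult_le_cancel_left)
  then have "exp (- 2 * phi x / h) * (exp (phi x / h)^2 * (a x)^2)
      \<le> exp (- 2 * phi x / h) * ((\<rho>2 - \<rho>1) * ?I ?S)"
    by (rule mult_left_mono) simp
  moreover have "exp (- 2 * phi x / h) * exp (phi x / h)^2 = 1"
    by (simp add: power2_eq_square exp_add[symmetric])
  ultimately show ?thesis by (simp add: power_divide mult_ac)
qed

end

lemma eigenpair_component:
  fixes f :: "complex \<Rightarrow> real"
  assumes f: "bounded_linear f"
    and r1: "0 < \<rho>1" and r12: "\<rho>1 < \<rho>2" and h: "0 < h"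
    and ddphi: "\<forall>x\<in>{\<rho>1..\<rho>2}. (dphi has_real_derivative ddphi x) (at x within {\<rho>1..\<rho>2})"
    and eq: "\<forall>x\<in>{\<rho>1<..<\<rho>2}. ddphi x + dphi x / x = B x"
    and eig: "is_eigenpair \<rho>1 \<rho>2 B dphi h m lam v"
  obtains a' a'' where "radial_solution \<rho>1 \<rho>2 h m lam B dphi ddphi (\<lambda>x. f (v x)) a' a''"
proof -
  interpret f: bounded_linear f by (fact f)
  obtain v' v'' where
    deriv: "\<forall>x\<in>{\<rho>1..\<rho>2}. (v has_vector_derivative v' x) (at x within {\<rho>1..\<rho>2}) \<and>
                         (v' has_vector_derivative v'' x) (at x within {\<rho>1..\<rho>2})"
    and bdry: "v \<rho>1 = 0" "v \<rho>2 = 0"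
    and ode: "\<forall>x\<in>{\<rho>1<..<\<rho>2}. - (h^2) *\<^sub>R (v'' x + (1 / (4 * x^2)) *\<^sub>R v x)
           + ((h * m / x - dphi x)^2 - h * B x) *\<^sub>R v x = lam *\<^sub>R v x"
    using eig unfolding is_eigenpair_def by blast
  show ?thesis
  proof (rule that[of "\<lambda>x. f (v' x)" "\<lambda>x. f (v'' x)"], unfold_locales)
    show "\<forall>x\<in>{\<rho>1..\<rho>2}. ((\<lambda>x. f (v x)) has_real_derivative f (v' x)) (at x within {\<rho>1..\<rho>2})"
      "\<forall>x\<in>{\<rho>1..\<rho>2}. ((\<lambda>x. f (v' x)) has_real_derivative f (v'' x)) (at x within {\<rho>1..\<rho>2})"
      using deriv
      by (auto simp: has_real_derivative_iff_has_vector_derivative intro: f.has_vector_derivative)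
    show "\<forall>x\<in>{\<rho>1<..<\<rho>2}. - (h^2) * (f (v'' x) + (1 / (4 * x^2)) * f (v x))
        + ((h * m / x - dphi x)^2 - h * B x) * f (v x) = lam * f (v x)"
    proof
      fix x assume "x \<in> {\<rho>1<..<\<rho>2}"
      then have "f (- (h^2) *\<^sub>R (v'' x + (1 / (4 * x^2)) *\<^sub>R v x)
          + ((h * m / x - dphi x)^2 - h * B x) *\<^sub>R v x) = f (lam *\<^sub>R v x)"
        using ode by simp
      then show "- (h^2) * (f (v'' x) + (1 / (4 * x^2)) * f (v x))
          + ((h * m / x - dphi x)^2 - h * B x) * f (v x) = lam * f (v x)"
        by (simp only: f.add f.scaleR f.neg real_scaleR_def)
    qed
  qed (use r1 r12 h ddphi eq bdry in \<open>auto simp: f.zero\<close>)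
qed

lemma eigenpair_continuous:
  "is_eigenpair \<rho>1 \<rho>2 B dphi h m lam v \<Longrightarrow> continuous_on {\<rho>1..\<rho>2} v"
  unfolding is_eigenpair_def by (blast intro: continuous_on_vector_derivative)

lemma eigenpair_mass_pos:
  assumes "\<rho>1 < \<rho>2" and eig: "is_eigenpair \<rho>1 \<rho>2 B dphi h m lam v"
  shows "0 < integral {\<rho>1..\<rho>2} (\<lambda>x. (cmod (v x))^2)"
proof -
  have cont: "continuous_on (cbox \<rho>1 \<rho>2) (\<lambda>x. (cmod (v x))^2)"
    using eigenpair_continuous[OF eig] by (auto simp: cbox_interval intro!: continuous_intros)
  have "\<exists>x\<in>{\<rho>1..\<rho>2}. v x \<noteq> 0" using eig unfolding is_eigenpair_def by blast
  then have "integral (cbox \<rho>1 \<rho>2) (\<lambda>x. (cmod (v x))^2) \<noteq> 0"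
    using integral_cbox_eq_0_iff[OF cont] \<open>\<rho>1 < \<rho>2\<close> by (auto simp: cbox_interval box_real)
  moreover have "0 \<le> integral (cbox \<rho>1 \<rho>2) (\<lambda>x. (cmod (v x))^2)"
    using cont by (intro integral_nonneg integrable_continuous) auto
  ultimately show ?thesis by (simp add: cbox_interval)
qed

lemma eigenpair_pointwise_bound:
  fixes phi :: "real \<Rightarrow> real"
  assumes r1: "0 < \<rho>1" and r12: "\<rho>1 < \<rho>2" and h: "0 < h"
    and dphi: "\<forall>x\<in>{\<rho>1..\<rho>2}. (phi has_real_derivative dphi x) (at x within {\<rho>1..\<rho>2})"
    and ddphi: "\<forall>x\<in>{\<rho>1..\<rho>2}. (dphi has_real_derivative ddphi x) (at x within {\<rho>1..\<rho>2})"
    and eq: "\<forall>x\<in>{\<rho>1<..<\<rho>2}. ddphi x + dphi x / x = B x"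
    and phi_nonpos: "\<forall>x\<in>{\<rho>1..\<rho>2}. phi x \<le> 0"
    and eig: "is_eigenpair \<rho>1 \<rho>2 B dphi h m lam v"
  shows "0 \<le> lam"
    and "x \<in> {\<rho>1..\<rho>2} \<Longrightarrow> (cmod (v x))^2
      \<le> (\<rho>2 - \<rho>1) * lam * integral {\<rho>1..\<rho>2} (\<lambda>x. (cmod (v x))^2) / h^2 * exp (- 2 * phi x / h)"
proof -
  let ?S = "{\<rho>1..\<rho>2}" and ?L = "\<rho>2 - \<rho>1"
  have component: "0 \<le> lam * integral ?S (\<lambda>x. (f (v x))^2) \<and>
      (\<forall>x\<in>?S. (f (v x))^2 \<le> ?L * lam * integral ?S (\<lambda>x. (f (v x))^2) / h^2 * exp (- 2 * phi x / h))"
    if f: "bounded_linear f" for f :: "complex \<Rightarrow> real"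
  proof -
    obtain a' a'' where "radial_solution \<rho>1 \<rho>2 h m lam B dphi ddphi (\<lambda>x. f (v x)) a' a''"
      using eigenpair_component[OF f r1 r12 h ddphi eq eig] .
    then interpret radial_solution \<rho>1 \<rho>2 h m lam B dphi ddphi "\<lambda>x. f (v x)" a' a'' .
    have "0 \<le> integral ?S (\<lambda>x. (w x)^2)"
      using continuous_on_w
      by (intro integral_nonneg integrable_continuous_interval continuous_intros) auto
    then show ?thesis
      using pointwise_bound[OF dphi phi_nonpos] energy_identity by (simp add: mult_ac)
  qed
  have integrable: "(\<lambda>x. (f (v x))^2) integrable_on ?S"
    if "bounded_linear f" for f :: "complex \<Rightarrow> real"
    using bounded_linear.continuous_on[OF that eigenpair_continuous[OF eig]]
    by (intro integrable_continuous_interval continuous_on_power)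
  have mass: "integral ?S (\<lambda>x. (cmod (v x))^2)
      = integral ?S (\<lambda>x. (Re (v x))^2) + integral ?S (\<lambda>x. (Im (v x))^2)"
    using integral_add[OF integrable[OF bounded_linear_Re] integrable[OF bounded_linear_Im]]
    by (simp add: cmod_power2)
  have "0 \<le> lam * integral ?S (\<lambda>x. (cmod (v x))^2)"
    using component[OF bounded_linear_Re] component[OF bounded_linear_Im] unfolding mass
    by (simp add: distrib_left)
  then show "0 \<le> lam"
    using eigenpair_mass_pos[OF r12 eig] by (simp add: zero_le_mult_iff)
  show "(cmod (v x))^2 \<le> ?L * lam * integral ?S (\<lambda>x. (cmod (v x))^2) / h^2 * exp (- 2 * phi x / h)"
    if x: "x \<in> ?S"
  proof -
    let ?E = "exp (- 2 * phi x / h)"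
    have "(cmod (v x))^2 = (Re (v x))^2 + (Im (v x))^2" by (rule cmod_power2)
    also have "\<dots> \<le> ?L * lam * integral ?S (\<lambda>x. (Re (v x))^2) / h^2 * ?E
        + ?L * lam * integral ?S (\<lambda>x. (Im (v x))^2) / h^2 * ?E"
      using component[OF bounded_linear_Re] component[OF bounded_linear_Im] x
      by (intro add_mono) auto
    also have "\<dots> = ?L * lam * integral ?S (\<lambda>x. (cmod (v x))^2) / h^2 * ?E"
      unfolding mass by (simp add: add_divide_distrib distrib_left distrib_right)
    finally show ?thesis .
  qed
qed

section \<open>Concentration of the weighted mass\<close>

lemma integral_mono_interval:
  fixes f :: "real \<Rightarrow> real"
  assumes cont: "continuous_on {p..q} f" and nonneg: "\<And>x. x \<in> {p..q} \<Longrightarrow> 0 \<le> f x"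
    and "p \<le> a" "b \<le> q"
  shows "integral {a..b} f \<le> integral {p..q} f"
proof (rule integral_subset_le)
  show "{a..b} \<subseteq> {p..q}" using assms by auto
  then show "f integrable_on {a..b}"
    using cont by (blast intro: integrable_continuous_interval continuous_on_subset)
qed (use cont nonneg in \<open>auto intro: integrable_continuous_interval\<close>)

lemma integral_outside_window_le:
  fixes f :: "real \<Rightarrow> real"
  assumes cont: "continuous_on {p..q} f" and window: "p \<le> r - t" "r + t \<le> q" "0 \<le> t"
    and bound: "\<And>x. x \<in> {p..q} \<Longrightarrow> t^2 \<le> (x - r)^2 \<Longrightarrow> f x \<le> K" and "0 \<le> K"
  shows "integral {p..q} f - integral {r - t..r + t} f \<le> (q - p) * K"
proof -
  have piece: "integral {a..b} f \<le> (b - a) * K"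
    if "p \<le> a" "a \<le> b" "b \<le> q" "\<And>x. x \<in> {a..b} \<Longrightarrow> t^2 \<le> (x - r)^2" for a b
  proof -
    have "integral {a..b} f \<le> integral {a..b} (\<lambda>_. K)"
      using that bound cont
      by (intro integral_le integrable_continuous_interval) (auto intro: continuous_on_subset)
    then show ?thesis using that by simp
  qed
  have left: "integral {p..r - t} f \<le> (r - t - p) * K"
  proof (rule piece)
    show "t^2 \<le> (x - r)^2" if "x \<in> {p..r - t}" for x
      using that window by (subst abs_le_square_iff[symmetric]) auto
  qed (use window in auto)
  have right: "integral {r + t..q} f \<le> (q - (r + t)) * K"
  proof (rule piece)
    show "t^2 \<le> (x - r)^2" if "x \<in> {r + t..q}" for x
      using that window by (subst abs_le_square_iff[symmetric]) auto
  qed (use window in auto)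
  have int: "f integrable_on {p..q}" using cont by (rule integrable_continuous_interval)
  have "integral {p..r - t} f + integral {r - t..q} f = integral {p..q} f"
    using window int by (intro Henstock_Kurzweil_Integration.integral_combine) auto
  moreover have "integral {r - t..r + t} f + integral {r + t..q} f = integral {r - t..q} f"
    using window integrable_on_subinterval[OF int, of "r - t" q]
    by (intro Henstock_Kurzweil_Integration.integral_combine) auto
  ultimately show ?thesis
    using left right mult_nonneg_nonneg[OF \<open>0 \<le> K\<close> window(3)] by (simp add: algebra_simps)
qed

lemma exp_minus_two_divide_antimono:
  fixes a b h :: real
  assumes "0 < h" and "a \<le> b"
  shows "exp (- 2 * b / h) \<le> exp (- 2 * a / h)"
  using assms by (simp add: divide_right_mono)

lemma deficit_le_of_tail_bounds:
  fixes A GI MT MW X Y Z L \<kappa> :: real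
  assumes pos: "0 < A" "0 < X" "0 < Y" and "Y \<le> Z" "0 \<le> L" "0 \<le> \<kappa>" "0 \<le> MW" "MW \<le> MT"
    and unweighted_tail: "A - GI \<le> L * (\<kappa> * A * Z)"
    and weighted_tail: "MT - MW \<le> L * (X * \<kappa> * A * Y^2)"
    and inner: "X * Y * GI \<le> MT"
  shows "1 - MW / MT \<le> 2 * L * \<kappa> * Z"
proof (cases "1 \<le> 2 * L * \<kappa> * Z")
  case True
  have "0 \<le> MW / MT" using \<open>0 \<le> MW\<close> \<open>MW \<le> MT\<close> by simp
  then show ?thesis using True by linarith
next
  case False
  \<comment> \<open>At least half of the unweighted mass lies in the inner window, where the weight
    is \<open>\<ge> X Y\<close>.\<close>
  have "L * (\<kappa> * A * Z) \<le> A / 2" using False pos by (simp add: mult_ac)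
  then have "A / 2 \<le> GI" using unweighted_tail by linarith
  then have "X * Y * (A / 2) \<le> X * Y * GI" using pos by (intro mult_left_mono) auto
  then have MT_lower: "X * Y * (A / 2) \<le> MT" using inner by linarith
  moreover have "0 < X * Y * (A / 2)" using pos by simp
  ultimately have "0 < MT" by linarith
  have "MT - MW \<le> 2 * L * \<kappa> * Y * (X * Y * (A / 2))"
    using weighted_tail by (simp add: power2_eq_square mult_ac)
  also have "\<dots> \<le> 2 * L * \<kappa> * Z * MT"
    using MT_lower assms by (intro mult_mono mult_nonneg_nonneg) auto
  finally have "MT - MW \<le> 2 * L * \<kappa> * Z * MT" .
  moreover have "1 - MW / MT = (MT - MW) / MT" using \<open>0 < MT\<close> by (simp add: diff_divide_distrib)
  ultimately show ?thesis using \<open>0 < MT\<close> by (simp add: pos_divide_le_eq)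
qed

context
  fixes G phi :: "real \<Rightarrow> real" and \<rho>1 \<rho>2 r0 c c' h \<kappa> :: real
  assumes G_cont: "continuous_on {\<rho>1..\<rho>2} G" and G_nonneg: "\<And>x. x \<in> {\<rho>1..\<rho>2} \<Longrightarrow> 0 \<le> G x"
    and phi_cont: "continuous_on {\<rho>1..\<rho>2} phi"
    and well: "\<And>x. x \<in> {\<rho>1..\<rho>2} \<Longrightarrow>
      c * (x - r0)^2 \<le> phi x - phi r0 \<and> phi x - phi r0 \<le> c' * (x - r0)^2"
    and c: "0 \<le> c" "0 \<le> c'" and h: "0 < h" and \<kappa>: "0 \<le> \<kappa>"
    and mass: "0 < integral {\<rho>1..\<rho>2} G"
    and G_bound: "\<And>x. x \<in> {\<rho>1..\<rho>2} \<Longrightarrow>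
      G x \<le> \<kappa> * integral {\<rho>1..\<rho>2} G * exp (- 2 * (phi x - phi r0) / h)"
begin

lemma relative_weight_far:
  assumes "x \<in> {\<rho>1..\<rho>2}" "t^2 \<le> (x - r0)^2"
  shows "exp (- 2 * (phi x - phi r0) / h) \<le> exp (- 2 * c * t^2 / h)"
proof -
  have "c * t^2 \<le> phi x - phi r0"
    using mult_left_mono[OF assms(2) c(1)] well[OF assms(1)] by linarith
  from exp_minus_two_divide_antimono[OF h this] show ?thesis by (simp only: mult.assoc)
qed

lemma unweighted_tail_le:
  assumes "\<rho>1 \<le> r0 - t" "r0 + t \<le> \<rho>2" "0 \<le> t"
  shows "integral {\<rho>1..\<rho>2} G - integral {r0 - t..r0 + t} G
    \<le> (\<rho>2 - \<rho>1) * (\<kappa> * integral {\<rho>1..\<rho>2} G * exp (- 2 * c * t^2 / h))"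
proof (rule integral_outside_window_le[OF G_cont assms])
  fix x assume "x \<in> {\<rho>1..\<rho>2}" "t^2 \<le> (x - r0)^2"
  then show "G x \<le> \<kappa> * integral {\<rho>1..\<rho>2} G * exp (- 2 * c * t^2 / h)"
    using G_bound relative_weight_far \<kappa> mass
    by (meson order_trans mult_left_mono less_imp_le mult_nonneg_nonneg)
qed (use \<kappa> mass in simp)

lemma weighted_tail_le:
  assumes "\<rho>1 \<le> r0 - t" "r0 + t \<le> \<rho>2" "0 \<le> t"
  shows "integral {\<rho>1..\<rho>2} (\<lambda>x. exp (- 2 * phi x / h) * G x)
      - integral {r0 - t..r0 + t} (\<lambda>x. exp (- 2 * phi x / h) * G x)
    \<le> (\<rho>2 - \<rho>1) * (exp (- 2 * phi r0 / h) * \<kappa> * integral {\<rho>1..\<rho>2} G * exp (- 2 * c * t^2 / h)^2)"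
proof (rule integral_outside_window_le[OF _ assms])
  show "continuous_on {\<rho>1..\<rho>2} (\<lambda>x. exp (- 2 * phi x / h) * G x)"
    using phi_cont G_cont h by (intro continuous_intros) auto
  fix x assume x: "x \<in> {\<rho>1..\<rho>2}" and far: "t^2 \<le> (x - r0)^2"
  let ?W = "exp (- 2 * (phi x - phi r0) / h)" and ?A = "integral {\<rho>1..\<rho>2} G"
  have split: "exp (- 2 * phi x / h) = exp (- 2 * phi r0 / h) * ?W"
    by (simp add: exp_add[symmetric] diff_divide_distrib algebra_simps)
  have "exp (- 2 * phi x / h) * G x \<le> exp (- 2 * phi r0 / h) * ?W * (\<kappa> * ?A * ?W)"
    unfolding split using G_bound[OF x] by (intro mult_left_mono) auto
  also have "\<dots> = exp (- 2 * phi r0 / h) * \<kappa> * ?A * ?W^2" by (simp add: power2_eq_square)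
  also have "\<dots> \<le> exp (- 2 * phi r0 / h) * \<kappa> * ?A * exp (- 2 * c * t^2 / h)^2"
    using relative_weight_far[OF x far] \<kappa> mass by (intro mult_left_mono power_mono) auto
  finally show "exp (- 2 * phi x / h) * G x
      \<le> exp (- 2 * phi r0 / h) * \<kappa> * ?A * exp (- 2 * c * t^2 / h)^2" .
qed (use \<kappa> mass in simp)

lemma weighted_inner_ge:
  assumes window: "\<rho>1 \<le> r0 - s" "r0 + s \<le> \<rho>2" and inner: "0 \<le> s'" "s' \<le> s" "c' * s'^2 \<le> c * s^2"
  shows "exp (- 2 * phi r0 / h) * exp (- 2 * c * s^2 / h) * integral {r0 - s'..r0 + s'} G
    \<le> integral {\<rho>1..\<rho>2} (\<lambda>x. exp (- 2 * phi x / h) * G x)"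
proof -
  let ?F = "\<lambda>x. exp (- 2 * phi x / h) * G x"
  have sub: "{r0 - s'..r0 + s'} \<subseteq> {\<rho>1..\<rho>2}" using window inner by auto
  have F_cont: "continuous_on {\<rho>1..\<rho>2} ?F"
    using phi_cont G_cont h by (intro continuous_intros) auto
  have "exp (- 2 * phi r0 / h) * exp (- 2 * c * s^2 / h) * integral {r0 - s'..r0 + s'} G
      = integral {r0 - s'..r0 + s'} (\<lambda>x. exp (- 2 * phi r0 / h) * exp (- 2 * c * s^2 / h) * G x)"
    by simp
  also have "\<dots> \<le> integral {r0 - s'..r0 + s'} ?F"
  proof (rule integral_le)
    show "(\<lambda>x. exp (- 2 * phi r0 / h) * exp (- 2 * c * s^2 / h) * G x)
        integrable_on {r0 - s'..r0 + s'}"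
      "?F integrable_on {r0 - s'..r0 + s'}"
      using continuous_on_subset[OF G_cont sub] continuous_on_subset[OF F_cont sub]
      by (auto intro!: integrable_continuous_interval continuous_intros)
    fix x assume x: "x \<in> {r0 - s'..r0 + s'}"
    then have "(x - r0)^2 \<le> s'^2" using inner by (simp add: abs_le_square_iff[symmetric] abs_le_iff)
    then have "phi x - phi r0 \<le> c * s^2"
      using well[of x] x sub mult_left_mono[OF _ c(2)] inner by fastforce
    from exp_minus_two_divide_antimono[OF h this]
    have "exp (- 2 * phi r0 / h) * exp (- 2 * c * s^2 / h) \<le> exp (- 2 * phi x / h)"
      by (simp add: mult.assoc exp_add[symmetric] diff_divide_distrib algebra_simps)
    then show "exp (- 2 * phi r0 / h) * exp (- 2 * c * s^2 / h) * G x \<le> ?F x"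
      using G_nonneg x sub by (intro mult_right_mono) auto
  qed
  also have "\<dots> \<le> integral {\<rho>1..\<rho>2} ?F"
    using F_cont G_nonneg window inner by (intro integral_mono_interval) auto
  finally show ?thesis .
qed

lemma weighted_mass_concentration:
  assumes window: "\<rho>1 \<le> r0 - s" "r0 + s \<le> \<rho>2" and inner: "0 \<le> s'" "s' \<le> s" "c' * s'^2 \<le> c * s^2"
  shows "1 - integral {r0 - s..r0 + s} (\<lambda>x. exp (- 2 * phi x / h) * G x)
           / integral {\<rho>1..\<rho>2} (\<lambda>x. exp (- 2 * phi x / h) * G x)
         \<le> 2 * (\<rho>2 - \<rho>1) * \<kappa> * exp (- 2 * c * s'^2 / h)"
proof (rule deficit_le_of_tail_bounds[OF mass _ _ _ _ \<kappa> _ _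
      unweighted_tail_le[of s'] weighted_tail_le[of s] weighted_inner_ge[OF window inner]])
  let ?F = "\<lambda>x. exp (- 2 * phi x / h) * G x"
  have F_cont: "continuous_on {\<rho>1..\<rho>2} ?F"
    using phi_cont G_cont h by (intro continuous_intros) auto
  show "0 \<le> integral {r0 - s..r0 + s} ?F"
    using F_cont G_nonneg window
    by (intro integral_nonneg integrable_continuous_interval) (auto intro: continuous_on_subset)
  show "integral {r0 - s..r0 + s} ?F \<le> integral {\<rho>1..\<rho>2} ?F"
    using F_cont G_nonneg window by (intro integral_mono_interval) auto
  have "s'^2 \<le> s^2" using inner by (simp add: power_mono)
  from exp_minus_two_divide_antimono[OF h mult_left_mono[OF this c(1)]]
  show "exp (- 2 * c * s^2 / h) \<le> exp (- 2 * c * s'^2 / h)" by (simp only: mult.assoc)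
qed (use window inner in auto)

end

lemma powr_three_halves_divide_square:
  fixes h :: real
  assumes "0 < h"
  shows "h powr (3/2) / h^2 = h powr (-1/2)"
proof -
  have "h powr (3/2) = h powr (-1/2 + 2)" by simp
  also have "\<dots> = h powr (-1/2) * h^2"
    using assms by (simp only: powr_add powr_numeral less_imp_le)
  finally show ?thesis using assms by simp
qed

lemma eigenfunction_concentration:
  fixes B phi dphi ddphi :: "real \<Rightarrow> real" and v :: "real \<Rightarrow> complex" and N :: nat
  assumes r1: "0 < \<rho>1" and r12: "\<rho>1 < \<rho>2" and h: "0 < h"
    and dphi: "\<forall>x\<in>{\<rho>1..\<rho>2}. (phi has_real_derivative dphi x) (at x within {\<rho>1..\<rho>2})"
    and ddphi: "\<forall>x\<in>{\<rho>1..\<rho>2}. (dphi has_real_derivative ddphi x) (at x within {\<rho>1..\<rho>2})"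
    and eq: "\<forall>x\<in>{\<rho>1<..<\<rho>2}. ddphi x + dphi x / x = B x"
    and well: "\<And>x. x \<in> {\<rho>1..\<rho>2} \<Longrightarrow>
      c * (x - rmin)^2 \<le> phi x - phi rmin \<and> phi x - phi rmin \<le> c' * (x - rmin)^2"
    and c: "0 \<le> c" "0 \<le> c'"
    and phi_nonpos: "\<forall>x\<in>{\<rho>1..\<rho>2}. phi x \<le> 0"
    and window: "\<rho>1 \<le> rmin - s" "rmin + s \<le> \<rho>2"
    and inner: "0 \<le> s'" "s' \<le> s" "c' * s'^2 \<le> c * s^2"
    and decay: "(\<rho>2 - \<rho>1)^2 * exp (- 2 * c * s'^2 / h) \<le> h^N * h powr (3/2)"
    and eig: "is_eigenpair \<rho>1 \<rho>2 B dphi h m lam v"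
  shows "1 - wmass phi h v (rmin - s) (rmin + s) / wmass phi h v \<rho>1 \<rho>2
    \<le> 2 * h^N * (h powr (-1/2) * exp (- 2 * phi rmin / h) * lam)"
proof -
  let ?S = "{\<rho>1..\<rho>2}" and ?L = "\<rho>2 - \<rho>1"
  define X where "X = exp (- 2 * phi rmin / h)"
  define \<kappa> where "\<kappa> = ?L * lam * X / h^2"
  have lam: "0 \<le> lam"
    by (rule eigenpair_pointwise_bound(1)[OF r1 r12 h dphi ddphi eq phi_nonpos eig])
  have "1 - wmass phi h v (rmin - s) (rmin + s) / wmass phi h v \<rho>1 \<rho>2
      \<le> 2 * ?L * \<kappa> * exp (- 2 * c * s'^2 / h)"
    unfolding wmass_def
  proof (rule weighted_mass_concentration[OF _ _ _ well c h _ _ _ window inner])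
    show "continuous_on ?S (\<lambda>x. (cmod (v x))^2)"
      using eigenpair_continuous[OF eig] by (intro continuous_intros)
    show "continuous_on ?S phi" using dphi by (intro DERIV_continuous_on) auto
    show "0 < integral ?S (\<lambda>x. (cmod (v x))^2)" by (rule eigenpair_mass_pos[OF r12 eig])
    show "0 \<le> \<kappa>" unfolding \<kappa>_def X_def using lam r12 by simp
    fix x assume x: "x \<in> ?S"
    have "exp (- 2 * phi x / h) = X * exp (- 2 * (phi x - phi rmin) / h)"
      unfolding X_def by (simp add: exp_add[symmetric] diff_divide_distrib algebra_simps)
    then show "(cmod (v x))^2
        \<le> \<kappa> * integral ?S (\<lambda>x. (cmod (v x))^2) * exp (- 2 * (phi x - phi rmin) / h)"
      using eigenpair_pointwise_bound(2)[OF r1 r12 h dphi ddphi eq phi_nonpos eig x]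
      by (simp add: \<kappa>_def mult_ac)
  qed simp
  also have "\<dots> = 2 * lam * X * (?L^2 * exp (- 2 * c * s'^2 / h)) / h^2"
    by (simp add: \<kappa>_def power2_eq_square)
  also have "\<dots> \<le> 2 * lam * X * (h^N * h powr (3/2)) / h^2"
    using decay lam h by (intro divide_right_mono mult_left_mono) (auto simp: X_def)
  also have "\<dots> = 2 * lam * X * h^N * (h powr (3/2) / h^2)"
    by (simp only: times_divide_eq_right mult.assoc)
  also have "\<dots> = 2 * h^N * (h powr (-1/2) * X * lam)"
    unfolding powr_three_halves_divide_square[OF h] by (simp only: mult_ac)
  finally show ?thesis by (simp add: X_def)
qed

lemma wmass_deficit_bounds:
  fixes phi :: "real \<Rightarrow> real" and v :: "real \<Rightarrow> complex"
  assumes "0 < h" "continuous_on {\<rho>1..\<rho>2} phi" "continuous_on {\<rho>1..\<rho>2} v"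
    and "\<rho>1 \<le> a'" "a' \<le> a" "b \<le> b'" "b' \<le> \<rho>2"
  shows "0 \<le> 1 - wmass phi h v a' b' / wmass phi h v \<rho>1 \<rho>2"
    and "1 - wmass phi h v a' b' / wmass phi h v \<rho>1 \<rho>2
      \<le> 1 - wmass phi h v a b / wmass phi h v \<rho>1 \<rho>2"
proof -
  let ?f = "\<lambda>r. exp (- 2 * phi r / h) * (cmod (v r))^2"
  have cont: "continuous_on {\<rho>1..\<rho>2} ?f"
    using assms(1-3) by (intro continuous_intros) auto
  have inner: "wmass phi h v a b \<le> wmass phi h v a' b'"
    unfolding wmass_def
    by (rule integral_mono_interval[OF continuous_on_subset[OF cont]]) (use assms in auto)
  have outer: "wmass phi h v a' b' \<le> wmass phi h v \<rho>1 \<rho>2"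
    unfolding wmass_def by (rule integral_mono_interval[OF cont]) (use assms in auto)
  have "0 \<le> wmass phi h v a b"
    unfolding wmass_def using assms
    by (intro integral_nonneg integrable_continuous_interval continuous_on_subset[OF cont]) auto
  then have total_nonneg: "0 \<le> wmass phi h v \<rho>1 \<rho>2" using inner outer by linarith
  show "0 \<le> 1 - wmass phi h v a' b' / wmass phi h v \<rho>1 \<rho>2"
    using outer total_nonneg by (cases "wmass phi h v \<rho>1 \<rho>2 = 0") (simp_all add: divide_le_eq_1)
  show "1 - wmass phi h v a' b' / wmass phi h v \<rho>1 \<rho>2 \<le> 1 - wmass phi h v a b / wmass phi h v \<rho>1 \<rho>2"
    using divide_right_mono[OF inner total_nonneg] by simp
qed

section \<open>The semiclassical limit\<close>

lemma smooth_on_interval_imp_continuous_on: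
  assumes "smooth_on_interval a b f"
  shows "continuous_on {a..b} f"
proof -
  obtain D where D0: "\<forall>x\<in>{a..b}. D 0 x = f x"
    and D: "\<forall>k. \<forall>x\<in>{a..b}. (D k has_real_derivative D (Suc k) x) (at x within {a..b})"
    using assms unfolding smooth_on_interval_def by blast
  have "continuous_on {a..b} (D 0)" using D by (intro DERIV_continuous_on[where D = "D 1"]) auto
  then show ?thesis by (rule continuous_on_eq) (use D0 in auto)
qed

lemma eventually_at_right_0_imp_Ioc:
  assumes "\<forall>\<^sub>F h in at_right (0::real). P h"
  obtains h0 where "0 < h0" "\<forall>h\<in>{0<..h0}. P h"
proof -
  obtain b where "0 < b" "\<forall>h>0. h < b \<longrightarrow> P h"
    using assms by (auto simp: eventually_at_right_field)
  then show thesis by (intro that[of "b / 2"]) auto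
qed

lemma eventually_powr_le:
  fixes \<alpha> d :: real
  assumes "0 < \<alpha>" "0 < d"
  shows "\<forall>\<^sub>F h in at_right 0. h powr \<alpha> \<le> d"
  using assms by real_asymp

locale radial_well =
  fixes \<rho>1 \<rho>2 rmin :: real and B phi dphi ddphi :: "real \<Rightarrow> real"
  assumes r1: "0 < \<rho>1" and r12: "\<rho>1 < \<rho>2"
    and B_cont: "continuous_on {\<rho>1..\<rho>2} B" and B_pos: "\<forall>x\<in>{\<rho>1..\<rho>2}. B x > 0"
    and dphi: "\<forall>x\<in>{\<rho>1..\<rho>2}. (phi has_real_derivative dphi x) (at x within {\<rho>1..\<rho>2})"
    and ddphi: "\<forall>x\<in>{\<rho>1..\<rho>2}. (dphi has_real_derivative ddphi x) (at x within {\<rho>1..\<rho>2})"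
    and eq: "\<forall>x\<in>{\<rho>1<..<\<rho>2}. ddphi x + dphi x / x = B x"
    and phi_bdry: "phi \<rho>1 = 0" "phi \<rho>2 = 0"
    and rmin: "rmin \<in> {\<rho>1<..<\<rho>2}"
    and min: "\<forall>x\<in>{\<rho>1..\<rho>2}. x \<noteq> rmin \<longrightarrow> phi rmin < phi x"
begin

lemma eventually_window_deficit:
  fixes \<alpha> :: real and N :: nat
  assumes \<alpha>: "0 < \<alpha>" "\<alpha> < 1/2"
  shows "\<forall>\<^sub>F h in at_right 0. \<forall>m v. is_eigenpair \<rho>1 \<rho>2 B dphi h m (lowest_eig \<rho>1 \<rho>2 B dphi h m) v \<longrightarrow>
    1 - wmass phi h v (rmin - h powr \<alpha>) (rmin + h powr \<alpha>) / wmass phi h v \<rho>1 \<rho>2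
      \<le> 2 * h ^ N * f1h \<rho>1 \<rho>2 B dphi (phi rmin) h m"
proof -
  obtain c c' where c: "0 < c" "0 < c'"
    and well: "\<And>x. x \<in> {\<rho>1..\<rho>2} \<Longrightarrow>
      c * (x - rmin)^2 \<le> phi x - phi rmin \<and> phi x - phi rmin \<le> c' * (x - rmin)^2"
    and phi_nonpos: "\<And>x. x \<in> {\<rho>1..\<rho>2} \<Longrightarrow> phi x \<le> 0"
    using potential_well_bounds[OF r1 r12 B_cont B_pos dphi ddphi eq phi_bdry rmin min] by blast
  \<comment> \<open>\<open>c' \<eta>\<^sup>2 \<le> c\<close> makes the weight on the inner window of radius \<open>\<eta> h\<^sup>\<alpha>\<close>
    dominate its bound outside the window of radius \<open>h\<^sup>\<alpha>\<close>.\<close>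
  define \<eta> where "\<eta> = min 1 (c / c')"
  have \<eta>: "0 < \<eta>" "\<eta> \<le> 1" using c by (auto simp: \<eta>_def)
  have "c' * \<eta>^2 \<le> c' * \<eta>" using \<eta> c by (simp add: power2_eq_square mult_left_le)
  also have "\<dots> \<le> c" using c by (simp add: \<eta>_def min_def field_simps)
  finally have \<eta>_c: "c' * \<eta>^2 \<le> c" .
  have fits: "\<forall>\<^sub>F h in at_right 0. h powr \<alpha> \<le> min (rmin - \<rho>1) (\<rho>2 - rmin)"
    using rmin \<alpha> by (intro eventually_powr_le) auto
  have decay: "\<forall>\<^sub>F h in at_right 0.
      (\<rho>2 - \<rho>1)^2 * exp (- 2 * c * (\<eta> * h powr \<alpha>)^2 / h) \<le> h ^ N * h powr (3/2)"
    using c \<eta> \<alpha> by real_asymp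
  show ?thesis
    using eventually_conj[OF eventually_conj[OF fits decay] eventually_at_right_less]
  proof (rule eventually_mono, safe)
    fix h m v
    assume h: "0 < h" and "h powr \<alpha> \<le> min (rmin - \<rho>1) (\<rho>2 - rmin)"
      and "(\<rho>2 - \<rho>1)^2 * exp (- 2 * c * (\<eta> * h powr \<alpha>)^2 / h) \<le> h ^ N * h powr (3/2)"
      and "is_eigenpair \<rho>1 \<rho>2 B dphi h m (lowest_eig \<rho>1 \<rho>2 B dphi h m) v"
    moreover have "c' * (\<eta> * h powr \<alpha>)^2 \<le> c * (h powr \<alpha>)^2"
      using mult_right_mono[OF \<eta>_c, of "(h powr \<alpha>)^2"] by (simp add: power_mult_distrib mult_ac)
    ultimately show "1 - wmass phi h v (rmin - h powr \<alpha>) (rmin + h powr \<alpha>) / wmass phi h v \<rho>1 \<rho>2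
      \<le> 2 * h ^ N * f1h \<rho>1 \<rho>2 B dphi (phi rmin) h m"
      unfolding f1h_def using \<eta> c phi_nonpos
      by (intro eigenfunction_concentration[OF r1 r12 h dphi ddphi eq well]) auto
  qed
qed

lemma mass_deficit_estimate:
  fixes \<alpha> :: real and N :: nat and a b :: "real \<Rightarrow> real"
  assumes \<alpha>: "0 < \<alpha>" "\<alpha> < 1/2"
    and nested: "\<forall>\<^sub>F h in at_right 0.
      \<rho>1 \<le> a h \<and> a h \<le> rmin - h powr \<alpha> \<and> rmin + h powr \<alpha> \<le> b h \<and> b h \<le> \<rho>2"
  shows "\<exists>h0>0. \<exists>C>0. \<forall>h\<in>{0<..h0}. \<forall>m v.
    is_eigenpair \<rho>1 \<rho>2 B dphi h m (lowest_eig \<rho>1 \<rho>2 B dphi h m) v \<longrightarrow>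
      0 \<le> 1 - wmass phi h v (a h) (b h) / wmass phi h v \<rho>1 \<rho>2 \<and>
      1 - wmass phi h v (a h) (b h) / wmass phi h v \<rho>1 \<rho>2
        \<le> C * h ^ N * f1h \<rho>1 \<rho>2 B dphi (phi rmin) h m"
proof -
  obtain h0 where h0: "0 < h0" and bounds: "\<forall>h\<in>{0<..h0}.
      (\<rho>1 \<le> a h \<and> a h \<le> rmin - h powr \<alpha> \<and> rmin + h powr \<alpha> \<le> b h \<and> b h \<le> \<rho>2) \<and>
      (\<forall>m v. is_eigenpair \<rho>1 \<rho>2 B dphi h m (lowest_eig \<rho>1 \<rho>2 B dphi h m) v \<longrightarrow>
        1 - wmass phi h v (rmin - h powr \<alpha>) (rmin + h powr \<alpha>) / wmass phi h v \<rho>1 \<rho>2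
          \<le> 2 * h ^ N * f1h \<rho>1 \<rho>2 B dphi (phi rmin) h m)"
    using eventually_at_right_0_imp_Ioc[OF
        eventually_conj[OF nested eventually_window_deficit[OF \<alpha>]]]
    by blast
  have phi_cont: "continuous_on {\<rho>1..\<rho>2} phi" using dphi by (intro DERIV_continuous_on) auto
  show ?thesis
  proof (rule exI[of _ h0], rule conjI[OF h0], rule exI[of _ 2], intro conjI ballI allI impI)
    fix h m v assume h: "h \<in> {0<..h0}"
      and eig: "is_eigenpair \<rho>1 \<rho>2 B dphi h m (lowest_eig \<rho>1 \<rho>2 B dphi h m) v"
    have nested_h: "\<rho>1 \<le> a h" "a h \<le> rmin - h powr \<alpha>" "rmin + h powr \<alpha> \<le> b h" "b h \<le> \<rho>2"
      and window: "1 - wmass phi h v (rmin - h powr \<alpha>) (rmin + h powr \<alpha>) / wmass phi h v \<rho>1 \<rho>2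
        \<le> 2 * h ^ N * f1h \<rho>1 \<rho>2 B dphi (phi rmin) h m"
      using bounds h eig by auto
    have "0 < h" using h by simp
    note deficit = wmass_deficit_bounds[OF this phi_cont eigenpair_continuous[OF eig] nested_h]
    show "0 \<le> 1 - wmass phi h v (a h) (b h) / wmass phi h v \<rho>1 \<rho>2"
      by (fact deficit(1))
    show "1 - wmass phi h v (a h) (b h) / wmass phi h v \<rho>1 \<rho>2
        \<le> 2 * h ^ N * f1h \<rho>1 \<rho>2 B dphi (phi rmin) h m"
      using deficit(2) window by linarith
  qed simp
qed

end

theorem mainTheorem9:
  fixes \<rho>1 \<rho>2 rmin \<alpha> :: real and B phi dphi ddphi :: "real \<Rightarrow> real" and N :: nat
  assumes "0 < \<rho>1" and "\<rho>1 < \<rho>2"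
    and "smooth_on_interval \<rho>1 \<rho>2 B"
    and "\<forall>x\<in>{\<rho>1..\<rho>2}. B x > 0"
    and "\<forall>x\<in>{\<rho>1..\<rho>2}. (phi has_real_derivative dphi x) (at x within {\<rho>1..\<rho>2})"
    and "\<forall>x\<in>{\<rho>1..\<rho>2}. (dphi has_real_derivative ddphi x) (at x within {\<rho>1..\<rho>2})"
    and "\<forall>x\<in>{\<rho>1<..<\<rho>2}. ddphi x + dphi x / x = B x"
    and "phi \<rho>1 = 0" and "phi \<rho>2 = 0"
    and "rmin \<in> {\<rho>1<..<\<rho>2}"
    and "\<forall>x\<in>{\<rho>1..\<rho>2}. x \<noteq> rmin \<longrightarrow> phi rmin < phi x"
    and "phi rmin < 0"
    and "0 < \<alpha>" and "\<alpha> < 1/2"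
  shows "(\<exists>h0>0. \<exists>C>0. \<forall>h\<in>{0<..h0}. \<forall>m::real. \<forall>v.
            is_eigenpair \<rho>1 \<rho>2 B dphi h m (lowest_eig \<rho>1 \<rho>2 B dphi h m) v \<longrightarrow>
            0 \<le> 1 - wmass phi h v (rmin - h powr \<alpha>) (rmin + h powr \<alpha>) / wmass phi h v \<rho>1 \<rho>2 \<and>
            1 - wmass phi h v (rmin - h powr \<alpha>) (rmin + h powr \<alpha>) / wmass phi h v \<rho>1 \<rho>2
              \<le> C * h ^ N * f1h \<rho>1 \<rho>2 B dphi (phi rmin) h m)
       \<and> (\<exists>\<delta>0>0. \<forall>\<delta>\<in>{0<..<\<delta>0}. \<exists>h0>0. \<exists>C>0. \<forall>h\<in>{0<..h0}. \<forall>m::real. \<forall>v.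
            is_eigenpair \<rho>1 \<rho>2 B dphi h m (lowest_eig \<rho>1 \<rho>2 B dphi h m) v \<longrightarrow>
            0 \<le> 1 - wmass phi h v (\<rho>1 + \<delta>) (\<rho>2 - \<delta>) / wmass phi h v \<rho>1 \<rho>2 \<and>
            1 - wmass phi h v (\<rho>1 + \<delta>) (\<rho>2 - \<delta>) / wmass phi h v \<rho>1 \<rho>2
              \<le> C * h ^ N * f1h \<rho>1 \<rho>2 B dphi (phi rmin) h m)"
proof -
  interpret radial_well \<rho>1 \<rho>2 rmin B phi dphi ddphi
    using assms(1-11) smooth_on_interval_imp_continuous_on[OF assms(3)] by unfold_locales auto
  define d0 where "d0 = min (rmin - \<rho>1) (\<rho>2 - rmin)"
  have "0 < d0" using rmin by (simp add: d0_def)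
  note fits = eventually_powr_le[OF assms(13)]
  show ?thesis
  proof (rule conjI, goal_cases)
    case 1
    show ?case
      by (rule mass_deficit_estimate[OF assms(13,14)])
         (use fits[OF \<open>0 < d0\<close>] in \<open>auto elim!: eventually_mono simp: d0_def\<close>)
  next
    case 2
    show ?case
    proof (rule exI[of _ d0], intro conjI ballI \<open>0 < d0\<close>, goal_cases)
      case (1 \<delta>)
      then show ?case
        by (intro mass_deficit_estimate[OF assms(13,14)])
           (use fits[of "d0 - \<delta>"] in \<open>auto elim!: eventually_mono simp: d0_def\<close>)
    qed
  qed
qed

end
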